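(* Assume BMIP has a finite optimal solution. Let $Q=2^J$ and let $\mathbf t^{k,1},\dots,\mathbf t^{k,Q}$ enumerate all vectors in $\{0,1\}^J$. Then BMIP1 is equivalent (same optimal value and same optimal values of the variables $(\mathbf p,\mathbf p^s,\mathbf z,\mathbf x',\mathbf q',\mathbf y',\mathbf t')$) to the single-level problem $$\textbf{BMIPe}:\ \max\ \mathcal P(\mathbf p,\mathbf p^s,\mathbf z,\mathbf y',\mathbf t')$$ over $(\mathbf p,\mathbf p^s,\mathbf z,\mathbf x',\mathbf q',\mathbf y',\mathbf t')$ and dual variables $\mu_1^{k,l},\mu_2^{k,l},\nu_j^{k,l},\Gamma_j^{k,l},\sigma_j^{k,l},\xi_i^{k,l},\tau_{i,j}^{k,l}\ge0$, $\eta_i^{k,l}\in\mathbb R$ ($k\in\mathcal K$, $1\le l\le Q$), subject to $(\mathbf p,\mathbf p^s,\mathbf z,\mathbf x',\mathbf q',\mathbf y',\mathbf t')\in\mathcal H$, $(\mathbf x'^k,\mathbf q'^k,\mathbf y'^k,\mathbf t'^k)\in\mathcal S^k(\mathbf p,\mathbf p^s,\mathbf z)$ for all $k$, and, for all $k$ and all $1\le l\le Q$: $$p_0(1+\mu_1^{k,l})-\mu_2^{k,l}\ge0;\quad p_j\mu_1^{k,l}-\Gamma_j^{k,l}+\sigma_j^{k,l}+p_j\ge0\ \forall j;$$ $$\mu_2^{k,l}+d_{i,0}\xi_i^{k,l}-\eta_i^{k,l}\ge-w^kd_{i,0}\ \forall i;\quad \eta_i^{k,l}\le\psi_i^k\ \forall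 i;\quad \Gamma_j^{k,l}+d_{i,j}\xi_i^{k,l}+\tau_{i,j}^{k,l}-\eta_i^{k,l}\ge-w^kd_{i,j}\ \forall i,j;$$ $$\mathcal C^k(\mathbf x'^k,\mathbf q'^k,\mathbf y'^k,\mathbf t'^k\mid\mathbf p,\mathbf p^s,\mathbf z)\le\sum_j(\phi_j^k+s^kp_j^s)t_j^{k,l}-\mu_1^{k,l}\Big(B^k-\sum_j(\phi_j^k+s^kp_j^s)t_j^{k,l}\Big)+\sum_j\nu_j^{k,l}(t_j^{k,l}-z_j)$$ $$\qquad+\sum_iR_i^k\eta_i^{k,l}-\sum_iR_i^kD^{k,m}\xi_i^{k,l}-\sum_jC_jt_j^{k,l}\sigma_j^{k,l}-\sum_{i,j}a_{i,j}^k\tau_{i,j}^{k,l}R_i^k.$$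
   Context: Model. Finite sets $\mathcal I$ (areas), $\mathcal J$ (edge nodes, $|\mathcal J|=J$), $\mathcal K$ (services). Nonnegative parameters $C_j>0$, $S_j$, $d_{i,j}$, $d_{i,0}$, $D^{k,m}$, $B^k$, $s^k$, $w^k$, $\psi_i^k$, $R_i^k$, $\phi_j^k$, $c_j$, $f_j$, $p_0$; $a_{i,j}^k\in\{0,1\}$; finite price menus $p_j^1,\dots,p_j^V$, $p_j^{s1},\dots,p_j^{sH}$. Follower-$k$ variables: $x_{i,0}^k,x_{i,j}^k,y_0^k,y_j^k,q_i^k\ge0$, $t_j^k\in\{0,1\}$. $\mathcal S^k(\mathbf p,\mathbf p^s,\mathbf z)$ is defined by: $p_0y_0^k+\sum_j p_jy_j^k+\sum_j(\phi_j^k+s^kp_j^s)t_j^k\le B^k$; $t_j^k\le z_j$; $y_j^k\le C_jt_j^k$; $y_0^k\ge\sum_i x_{i,0}^k$; $y_j^k\ge\sum_i x_{i,j}^k$; $x_{i,0}^k+\sum_j x_{i,j}^k+q_i^k=R_i^k$; $x_{i,0}^kd_{i,0}+\sum_jx_{i,j}^kd_{i,j}\le D^{k,m}R_i^k$; $x_{i,j}^k\le a_{i,j}^kR_i^k$. Follower cost $\mathcal C^k=p_0y_0^k+\sum_jp_jy_j^k+\sum_i\psi_i^kq_i^k+\sum_j(\phi_j^k+s^kp_j^s)t_j^k+w^k(\sum_ix_{i,0}^kd_{i,0}+\sum_{i,j}x_{i,j}^kd_{i,j})$. $\mathcal H$: $\sum_ky_j^k\le z_jC_j$, $z_j\in\{0,1\}$,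 $\sum_ks^kt_j^k\le z_jS_j$, each $p_j$, $p^s_j$ chosen from its menu. Platform profit $\mathcal P=\sum_{j,k}(\phi_j^k+s^kp_j^s)t_j^k+\sum_jp_j\sum_ky_j^k-\sum_j(f_jz_j+c_j\sum_ky_j^k/C_j)$. BMIP: maximize $\mathcal P$ over tuples in $\mathcal H$ whose follower-$k$ components minimize $\mathcal C^k$ over $\mathcal S^k(\mathbf p,\mathbf p^s,\mathbf z)$ for every $k$. BMIP1: maximize $\mathcal P(\mathbf p,\mathbf p^s,\mathbf z,\mathbf y',\mathbf t')$ s.t. the tuple with primed follower variables lies in $\mathcal H$, $(\mathbf x'^k,\mathbf q'^k,\mathbf y'^k,\mathbf t'^k)\in\mathcal S^k(\mathbf p,\mathbf p^s,\mathbf z)$, and $\mathcal C^k$ at the primed vector is $\le\min_{\mathcal S^k(\mathbf p,\mathbf p^s,\mathbf z)}\mathcal C^k$ for each $k$. *)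

theory Defs
  imports "HOL-Analysis.Analysis"
begin

text \<open>Index sets: areas are the finite type 'i, edge nodes the finite type 'j
 (so J = CARD('j)), services the finite type 'k.
 Binary quantities (z_j, t_j^k, a_{i,j}^k) are real numbers restricted to {0,1}.\<close>

record ('i,'j,'k) prm =
  Cj    :: "'j \<Rightarrow> real"
  Sj    :: "'j \<Rightarrow> real"
  dij   :: "'i \<Rightarrow> 'j \<Rightarrow> real"
  di0   :: "'i \<Rightarrow> real"
  Dkm   :: "'k \<Rightarrow> real"
  Bk    :: "'k \<Rightarrow> real"
  sk    :: "'k \<Rightarrow> real"
  wk    :: "'k \<Rightarrow> real"
  psik  :: "'i \<Rightarrow> 'k \<Rightarrow> real"
  Rik   :: "'i \<Rightarrow> 'k \<Rightarrow> real"
  phijk :: "'j \<Rightarrow> 'k \<Rightarrow> real"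
  cj    :: "'j \<Rightarrow> real"
  fj    :: "'j \<Rightarrow> real"
  p0    :: real
  aijk  :: "'i \<Rightarrow> 'j \<Rightarrow> 'k \<Rightarrow> real"
  menu  :: "'j \<Rightarrow> real set"
  smenu :: "'j \<Rightarrow> real set"

definition valid_prm :: "('i::finite,'j::finite,'k::finite) prm \<Rightarrow> bool" where
  "valid_prm P \<longleftrightarrow>
     (\<forall>j. Cj P j > 0) \<and> (\<forall>j. Sj P j \<ge> 0) \<and> (\<forall>i j. dij P i j \<ge> 0) \<and> (\<forall>i. di0 P i \<ge> 0)
   \<and> (\<forall>k. Dkm P k \<ge> 0) \<and> (\<forall>k. Bk P k \<ge> 0) \<and> (\<forall>k. sk P k \<ge> 0) \<and> (\<forall>k. wk P k \<ge> 0)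
   \<and> (\<forall>i k. psik P i k \<ge> 0) \<and> (\<forall>i k. Rik P i k \<ge> 0) \<and> (\<forall>j k. phijk P j k \<ge> 0)
   \<and> (\<forall>j. cj P j \<ge> 0) \<and> (\<forall>j. fj P j \<ge> 0) \<and> p0 P \<ge> 0
   \<and> (\<forall>i j k. aijk P i j k \<in> {0,1})
   \<and> (\<forall>j. finite (menu P j)) \<and> (\<forall>j. finite (smenu P j))"

record ('i,'j) fv =
  fx0 :: "'i \<Rightarrow> real"
  fx  :: "'i \<Rightarrow> 'j \<Rightarrow> real"
  fq  :: "'i \<Rightarrow> real"
  fy0 :: real
  fy  :: "'j \<Rightarrow> real"
  ft  :: "'j \<Rightarrow> real"

record ('i,'j,'k) pv =
  pp  :: "'j \<Rightarrow> real"
  pps :: "'j \<Rightarrow> real"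
  zz  :: "'j \<Rightarrow> real"
  fol :: "'k \<Rightarrow> ('i,'j) fv"

record ('i,'j) dv =
  mu1 :: real
  mu2 :: real
  nu  :: "'j \<Rightarrow> real"
  Gam :: "'j \<Rightarrow> real"
  sig :: "'j \<Rightarrow> real"
  xi  :: "'i \<Rightarrow> real"
  tau :: "'i \<Rightarrow> 'j \<Rightarrow> real"
  eta :: "'i \<Rightarrow> real"

definition Sk :: "('i::finite,'j::finite,'k::finite) prm \<Rightarrow> 'k \<Rightarrow> ('j \<Rightarrow> real) \<Rightarrow> ('j \<Rightarrow> real)
                  \<Rightarrow> ('j \<Rightarrow> real) \<Rightarrow> ('i,'j) fv set" where
  "Sk P k p ps z = {v.
     (\<forall>i. fx0 v i \<ge> 0) \<and> (\<forall>i j. fx v i j \<ge> 0) \<and> (\<forall>i. fq v i \<ge> 0) \<and> fy0 v \<ge> 0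
   \<and> (\<forall>j. fy v j \<ge> 0) \<and> (\<forall>j. ft v j \<in> {0,1})
   \<and> p0 P * fy0 v + (\<Sum>j\<in>UNIV. p j * fy v j)
       + (\<Sum>j\<in>UNIV. (phijk P j k + sk P k * ps j) * ft v j) \<le> Bk P k
   \<and> (\<forall>j. ft v j \<le> z j)
   \<and> (\<forall>j. fy v j \<le> Cj P j * ft v j)
   \<and> fy0 v \<ge> (\<Sum>i\<in>UNIV. fx0 v i)
   \<and> (\<forall>j. fy v j \<ge> (\<Sum>i\<in>UNIV. fx v i j))
   \<and> (\<forall>i. fx0 v i + (\<Sum>j\<in>UNIV. fx v i j) + fq v i = Rik P i k)
   \<and> (\<forall>i. fx0 v i * di0 P i + (\<Sum>j\<in>UNIV. fx v i j * dij P i j) \<le> Dkm P k * Rik P i k)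
   \<and> (\<forall>i j. fx v i j \<le> aijk P i j k * Rik P i k)}"

definition Ck :: "('i::finite,'j::finite,'k::finite) prm \<Rightarrow> 'k \<Rightarrow> ('j \<Rightarrow> real) \<Rightarrow> ('j \<Rightarrow> real)
                  \<Rightarrow> ('i,'j) fv \<Rightarrow> real" where
  "Ck P k p ps v =
     p0 P * fy0 v + (\<Sum>j\<in>UNIV. p j * fy v j) + (\<Sum>i\<in>UNIV. psik P i k * fq v i)
   + (\<Sum>j\<in>UNIV. (phijk P j k + sk P k * ps j) * ft v j)
   + wk P k * ((\<Sum>i\<in>UNIV. fx0 v i * di0 P i) + (\<Sum>i\<in>UNIV. \<Sum>j\<in>UNIV. fx v i j * dij P i j))"

definition inH :: "('i::finite,'j::finite,'k::finite) prm \<Rightarrow> ('i,'j,'k) pv \<Rightarrow> bool" where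
  "inH P v \<longleftrightarrow>
     (\<forall>j. (\<Sum>k\<in>UNIV. fy (fol v k) j) \<le> zz v j * Cj P j)
   \<and> (\<forall>j. zz v j \<in> {0,1})
   \<and> (\<forall>j. (\<Sum>k\<in>UNIV. sk P k * ft (fol v k) j) \<le> zz v j * Sj P j)
   \<and> (\<forall>j. pp v j \<in> menu P j) \<and> (\<forall>j. pps v j \<in> smenu P j)"

definition profit :: "('i::finite,'j::finite,'k::finite) prm \<Rightarrow> ('i,'j,'k) pv \<Rightarrow> real" where
  "profit P v =
     (\<Sum>j\<in>UNIV. \<Sum>k\<in>UNIV. (phijk P j k + sk P k * pps v j) * ft (fol v k) j)
   + (\<Sum>j\<in>UNIV. pp v j * (\<Sum>k\<in>UNIV. fy (fol v k) j))
   - (\<Sum>j\<in>UNIV. fj P j * zz v j + cj P j * (\<Sum>k\<in>UNIV. fy (fol v k) j) / Cj P j)"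

definition feas_BMIP :: "('i::finite,'j::finite,'k::finite) prm \<Rightarrow> ('i,'j,'k) pv \<Rightarrow> bool" where
  "feas_BMIP P v \<longleftrightarrow> inH P v \<and>
     (\<forall>k. is_arg_min (Ck P k (pp v) (pps v)) (\<lambda>u. u \<in> Sk P k (pp v) (pps v) (zz v)) (fol v k))"

definition opt_BMIP :: "('i::finite,'j::finite,'k::finite) prm \<Rightarrow> ('i,'j,'k) pv \<Rightarrow> bool" where
  "opt_BMIP P v \<longleftrightarrow> feas_BMIP P v \<and> (\<forall>v'. feas_BMIP P v' \<longrightarrow> profit P v' \<le> profit P v)"

definition feas_BMIP1 :: "('i::finite,'j::finite,'k::finite) prm \<Rightarrow> ('i,'j,'k) pv \<Rightarrow> bool" where
  "feas_BMIP1 P v \<longleftrightarrow> inH P v \<and>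
     (\<forall>k. fol v k \<in> Sk P k (pp v) (pps v) (zz v)) \<and>
     (\<forall>k. \<forall>u \<in> Sk P k (pp v) (pps v) (zz v). Ck P k (pp v) (pps v) (fol v k) \<le> Ck P k (pp v) (pps v) u)"

definition opt_BMIP1 :: "('i::finite,'j::finite,'k::finite) prm \<Rightarrow> ('i,'j,'k) pv \<Rightarrow> bool" where
  "opt_BMIP1 P v \<longleftrightarrow> feas_BMIP1 P v \<and> (\<forall>v'. feas_BMIP1 P v' \<longrightarrow> profit P v' \<le> profit P v)"

definition dual_ok :: "('i::finite,'j::finite,'k::finite) prm \<Rightarrow> ('i,'j,'k) pv \<Rightarrow> 'k
                       \<Rightarrow> ('j \<Rightarrow> real) \<Rightarrow> ('i,'j) dv \<Rightarrow> bool" where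
  "dual_ok P v k tv D \<longleftrightarrow>
     mu1 D \<ge> 0 \<and> mu2 D \<ge> 0 \<and> (\<forall>j. nu D j \<ge> 0) \<and> (\<forall>j. Gam D j \<ge> 0) \<and> (\<forall>j. sig D j \<ge> 0)
   \<and> (\<forall>i. xi D i \<ge> 0) \<and> (\<forall>i j. tau D i j \<ge> 0)
   \<and> p0 P * (1 + mu1 D) - mu2 D \<ge> 0
   \<and> (\<forall>j. pp v j * mu1 D - Gam D j + sig D j + pp v j \<ge> 0)
   \<and> (\<forall>i. mu2 D + di0 P i * xi D i - eta D i \<ge> - wk P k * di0 P i)
   \<and> (\<forall>i. eta D i \<le> psik P i k)
   \<and> (\<forall>i j. Gam D j + dij P i j * xi D i + tau D i j - eta D i \<ge> - wk P k * dij P i j)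
   \<and> Ck P k (pp v) (pps v) (fol v k) \<le>
        (\<Sum>j\<in>UNIV. (phijk P j k + sk P k * pps v j) * tv j)
      - mu1 D * (Bk P k - (\<Sum>j\<in>UNIV. (phijk P j k + sk P k * pps v j) * tv j))
      + (\<Sum>j\<in>UNIV. nu D j * (tv j - zz v j))
      + (\<Sum>i\<in>UNIV. Rik P i k * eta D i)
      - (\<Sum>i\<in>UNIV. Rik P i k * Dkm P k * xi D i)
      - (\<Sum>j\<in>UNIV. Cj P j * tv j * sig D j)
      - (\<Sum>i\<in>UNIV. \<Sum>j\<in>UNIV. aijk P i j k * tau D i j * Rik P i k)"

text \<open>BMIPe: en k l = t^{k,l} (l = 1..Q), duals D k l.\<close>
definition feas_BMIPe :: "('i::finite,'j::finite,'k::finite) prm \<Rightarrow> ('k \<Rightarrow> nat \<Rightarrow> 'j \<Rightarrow> real)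
                          \<Rightarrow> ('i,'j,'k) pv \<Rightarrow> ('k \<Rightarrow> nat \<Rightarrow> ('i,'j) dv) \<Rightarrow> bool" where
  "feas_BMIPe P en v D \<longleftrightarrow> inH P v \<and>
     (\<forall>k. fol v k \<in> Sk P k (pp v) (pps v) (zz v)) \<and>
     (\<forall>k. \<forall>l \<in> {1..2 ^ CARD('j)}. dual_ok P v k (en k l) (D k l))"

definition opt_BMIPe :: "('i::finite,'j::finite,'k::finite) prm \<Rightarrow> ('k \<Rightarrow> nat \<Rightarrow> 'j \<Rightarrow> real)
                          \<Rightarrow> ('i,'j,'k) pv \<Rightarrow> ('k \<Rightarrow> nat \<Rightarrow> ('i,'j) dv) \<Rightarrow> bool" where
  "opt_BMIPe P en v D \<longleftrightarrow> feas_BMIPe P en v D \<and>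
     (\<forall>v' D'. feas_BMIPe P en v' D' \<longrightarrow> profit P v' \<le> profit P v)"

end

theory Submission
  imports Defs
begin

text \<open>
  Once the leader's decision and a follower's activation vector \<open>t\<close> are fixed, the follower's
  remaining problem in \<open>(x, q, y)\<close> is a linear program. The BMIPe constraints for \<open>(k, l)\<close> say
  exactly that the follower cost at the primed point is at most the objective of a dual feasible
  point of this LP for \<open>t = t\<^sup>k\<^sup>l\<close>. By weak duality this bounds the primed cost by the cost of every
  feasible point with activation vector \<open>t\<^sup>k\<^sup>l\<close>. Conversely, if the primed point is optimal, LP
  strong duality (obtained from Farkas' lemma, i.e. from separating a point from a finitely
  generated cone) provides such a dual point; this includes the case where the LP for \<open>t\<^sup>k\<^sup>l\<close> is
  infeasible and its dual is unbounded. Since \<open>t\<^sup>k\<^sup>l\<close> runs through all binary vectors, the dual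
  constraints of BMIPe are equivalent to the lower-level optimality condition of BMIP1. So the
  two problems have the same feasible points once the duals are forgotten, and therefore the
  same optimal solutions and the same optimal value.
\<close>

lemma sum_UNIV_Plus:
  "(\<Sum>x\<in>UNIV. f x) = (\<Sum>a\<in>UNIV. f (Inl a)) + (\<Sum>b\<in>UNIV. f (Inr b))"
  for f :: "'a::finite + 'b::finite \<Rightarrow> 'c::comm_monoid_add"
  by (subst UNIV_Plus_UNIV[symmetric], subst sum.Plus) (simp_all add: comp_def)

lemma sum_UNIV_prod:
  "(\<Sum>x\<in>UNIV. f x) = (\<Sum>a\<in>UNIV. \<Sum>b\<in>UNIV. f (a, b))"
  for f :: "'a::finite \<times> 'b::finite \<Rightarrow> 'c::comm_monoid_add"
  by (subst UNIV_Times_UNIV[symmetric], subst sum.cartesian_product) simp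

lemma if_zero_mult: "(if P then a else 0) * b = (if P then a * b else (0::'a::mult_zero))"
  by simp

lemma mult_if_zero: "b * (if P then a else 0) = (if P then b * a else (0::'a::mult_zero))"
  by simp

lemma sum_if_zero: "(\<Sum>x\<in>A. if P then f x else 0) = (if P then sum f A else 0)"
  by simp

section \<open>Farkas' lemma and linear programming duality\<close>

lemma separation_from_finite_cone:
  fixes G :: "'g::finite \<Rightarrow> 'v::euclidean_space"
  assumes "\<nexists>l. (\<forall>g. 0 \<le> l g) \<and> z = (\<Sum>g\<in>UNIV. l g *\<^sub>R G g)"
  shows "\<exists>a. (\<forall>g. 0 \<le> a \<bullet> G g) \<and> a \<bullet> z < 0"
proof -
  define K where "K = {(\<Sum>g\<in>UNIV. l g *\<^sub>R G g) | l. \<forall>g. 0 \<le> l g}"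
  have "convex_cone K"
    unfolding convex_cone_iff
  proof (intro conjI ballI allI impI)
    show "0 \<in> K"
      unfolding K_def by (auto intro!: exI[of _ "\<lambda>_. 0"])
    show "x + y \<in> K" if xy: "x \<in> K" "y \<in> K" for x y
    proof -
      obtain l m where "\<forall>g. 0 \<le> l g" "\<forall>g. 0 \<le> m g"
        and "x = (\<Sum>g\<in>UNIV. l g *\<^sub>R G g)" "y = (\<Sum>g\<in>UNIV. m g *\<^sub>R G g)"
        using xy unfolding K_def by blast
      then show ?thesis
        unfolding K_def
        by (intro CollectI exI[of _ "\<lambda>g. l g + m g"]) (simp add: scaleR_add_left sum.distrib)
    qed
    show "c *\<^sub>R x \<in> K" if x: "x \<in> K" and c: "0 \<le> c" for x and c :: real
    proof -
      obtain l where "\<forall>g. 0 \<le> l g" "x = (\<Sum>g\<in>UNIV. l g *\<^sub>R G g)"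
        using x unfolding K_def by blast
      then show ?thesis
        unfolding K_def using c
        by (intro CollectI exI[of _ "\<lambda>g. c * l g"]) (simp add: scaleR_sum_right)
    qed
  qed
  moreover have "G h \<in> K" for h
    unfolding K_def
    by (intro CollectI exI[of _ "\<lambda>g. if g = h then 1 else 0"])
      (simp add: if_distrib[of "\<lambda>c. c *\<^sub>R _"] cong: if_cong)
  ultimately have "convex_cone hull range G \<subseteq> K"
    by (intro hull_minimal) auto
  moreover have "z \<notin> K"
    using assms unfolding K_def by blast
  ultimately have "z \<notin> convex_cone hull range G"
    by blast
  then obtain a b where ab: "a \<bullet> z < b" "\<forall>x\<in>convex_cone hull range G. b < a \<bullet> x"
    using separating_hyperplane_closed_point[OF convex_convex_cone_hull
        closed_convex_cone_hull[OF finite[THEN finite_imageI]]]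
    by blast
  have "b < 0"
    using ab(2) convex_cone_hull_contains_0 by force
  have "0 \<le> a \<bullet> G g" for g
  proof (rule ccontr)
    assume neg: "\<not> 0 \<le> a \<bullet> G g"
    define c where "c = b / (a \<bullet> G g)"
    have "0 \<le> c"
      unfolding c_def using neg \<open>b < 0\<close> by (simp add: divide_nonpos_neg)
    then have "c *\<^sub>R G g \<in> convex_cone hull range G"
      by (simp add: convex_cone_hull_mul hull_inc)
    with ab(2) have "b < a \<bullet> (c *\<^sub>R G g)" by blast
    also have "\<dots> = b"
      using neg unfolding c_def by simp
    finally show False by simp
  qed
  then show ?thesis
    using ab(1) \<open>b < 0\<close> by force
qed

lemma farkas_alternative:
  fixes A :: "'s::finite \<Rightarrow> 'n::finite \<Rightarrow> real"
  shows "(\<exists>l. (\<forall>s. 0 \<le> l s) \<and> (\<forall>n. (\<Sum>s\<in>UNIV. l s * A s n) \<le> c n) \<and> d \<le> (\<Sum>s\<in>UNIV. l s * b s))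
    \<or> (\<exists>y r. (\<forall>n. 0 \<le> y n) \<and> r \<le> 0 \<and> (\<forall>s. 0 \<le> (\<Sum>n\<in>UNIV. A s n * y n) + r * b s)
            \<and> (\<Sum>n\<in>UNIV. c n * y n) + r * d < 0)"
proof -
  \<comment> \<open>The first alternative says that \<open>(c, d)\<close> lies in the cone generated by the \<open>G g\<close>:
    the rows \<open>(A s, b s)\<close>, plus unit vectors and \<open>(0, -1)\<close> absorbing the slack.\<close>
  define G :: "'s + 'n + unit \<Rightarrow> (real^'n) \<times> real" where
    "G g = (case g of Inl s \<Rightarrow> ((\<chi> n. A s n), b s) | Inr (Inl n) \<Rightarrow> (axis n 1, 0)
              | Inr (Inr _) \<Rightarrow> (0, -1))" for g
  define z where "z = ((\<chi> n. c n), d)"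
  show ?thesis
  proof (cases "\<exists>l. (\<forall>g. 0 \<le> l g) \<and> z = (\<Sum>g\<in>UNIV. l g *\<^sub>R G g)")
    case True
    then obtain l where l: "\<forall>g. 0 \<le> l g" and zl: "z = (\<Sum>g\<in>UNIV. l g *\<^sub>R G g)"
      by blast
    have "c n = (\<Sum>s\<in>UNIV. l (Inl s) * A s n) + l (Inr (Inl n))" for n
      using arg_cong[OF zl, of "\<lambda>v. fst v $ n"]
      by (simp add: z_def G_def fst_sum sum_component sum_UNIV_Plus axis_def if_distrib cong: if_cong)
    moreover have "d = (\<Sum>s\<in>UNIV. l (Inl s) * b s) - l (Inr (Inr ()))"
      using arg_cong[OF zl, of snd] by (simp add: z_def G_def snd_sum sum_UNIV_Plus UNIV_unit)
    ultimately show ?thesis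
      using l by (intro disjI1 exI[of _ "\<lambda>s. l (Inl s)"]) (auto simp: add_increasing2)
  next
    case False
    obtain a where "\<forall>g. 0 \<le> a \<bullet> G g" "a \<bullet> z < 0"
      using separation_from_finite_cone[OF False] by blast
    moreover obtain y r where "a = (y, r)"
      by fastforce
    ultimately have sep: "\<forall>g. 0 \<le> (y, r) \<bullet> G g" "(y, r) \<bullet> z < 0"
      by simp_all
    have "0 \<le> y $ n" for n
      using sep(1)[rule_format, of "Inr (Inl n)"] by (simp add: G_def inner_axis)
    moreover have "r \<le> 0"
      using sep(1)[rule_format, of "Inr (Inr ())"] by (simp add: G_def)
    moreover have "0 \<le> (\<Sum>n\<in>UNIV. A s n * y $ n) + r * b s" for s
      using sep(1)[rule_format, of "Inl s"] by (simp add: G_def inner_vec_def mult.commute)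
    moreover have "(\<Sum>n\<in>UNIV. c n * y $ n) + r * d < 0"
      using sep(2) by (simp add: z_def inner_vec_def mult.commute)
    ultimately show ?thesis
      by (intro disjI2 exI[of _ "\<lambda>n. y $ n"] exI[of _ r]) auto
  qed
qed

lemma lp_weak_duality:
  fixes A :: "'s::finite \<Rightarrow> 'n::finite \<Rightarrow> real"
  assumes "\<forall>s. 0 \<le> l s" "\<forall>n. (\<Sum>s\<in>UNIV. l s * A s n) \<le> c n"
    and "\<forall>n. 0 \<le> x n" "\<forall>s. b s \<le> (\<Sum>n\<in>UNIV. A s n * x n)"
  shows "(\<Sum>s\<in>UNIV. l s * b s) \<le> (\<Sum>n\<in>UNIV. c n * x n)"
proof -
  have "(\<Sum>s\<in>UNIV. l s * b s) \<le> (\<Sum>s\<in>UNIV. l s * (\<Sum>n\<in>UNIV. A s n * x n))"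
    using assms(1,4) by (intro sum_mono mult_left_mono) auto
  also have "\<dots> = (\<Sum>s\<in>UNIV. \<Sum>n\<in>UNIV. l s * A s n * x n)"
    by (simp add: sum_distrib_left mult.assoc)
  also have "\<dots> = (\<Sum>n\<in>UNIV. (\<Sum>s\<in>UNIV. l s * A s n) * x n)"
    by (subst sum.swap) (simp add: sum_distrib_right)
  also have "\<dots> \<le> (\<Sum>n\<in>UNIV. c n * x n)"
    using assms(2,3) by (intro sum_mono mult_right_mono) auto
  finally show ?thesis .
qed

lemma lp_strong_duality:
  fixes A :: "'s::finite \<Rightarrow> 'n::finite \<Rightarrow> real"
  assumes dual_feasible: "\<exists>l. (\<forall>s. 0 \<le> l s) \<and> (\<forall>n. (\<Sum>s\<in>UNIV. l s * A s n) \<le> c n)"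
    and primal_bound: "\<And>x. \<forall>n. 0 \<le> x n \<Longrightarrow> \<forall>s. b s \<le> (\<Sum>n\<in>UNIV. A s n * x n)
                  \<Longrightarrow> d \<le> (\<Sum>n\<in>UNIV. c n * x n)"
  shows "\<exists>l. (\<forall>s. 0 \<le> l s) \<and> (\<forall>n. (\<Sum>s\<in>UNIV. l s * A s n) \<le> c n) \<and> d \<le> (\<Sum>s\<in>UNIV. l s * b s)"
proof (rule ccontr)
  assume "\<not> ?thesis"
  then obtain y r where y: "\<forall>n. 0 \<le> y n" and "r \<le> 0"
    and Ay: "\<forall>s. 0 \<le> (\<Sum>n\<in>UNIV. A s n * y n) + r * b s"
    and cy: "(\<Sum>n\<in>UNIV. c n * y n) + r * d < 0"
    using farkas_alternative[of A c d b] by blast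
  show False
  proof (cases "r = 0")
    case True
    \<comment> \<open>Then \<open>y\<close> is a recession direction of the primal of negative cost, which the
      existence of a dual feasible point excludes.\<close>
    obtain l where "\<forall>s. 0 \<le> l s" "\<forall>n. (\<Sum>s\<in>UNIV. l s * A s n) \<le> c n"
      using dual_feasible by blast
    then have "(\<Sum>s\<in>UNIV. l s * 0) \<le> (\<Sum>n\<in>UNIV. c n * y n)"
      using y Ay True by (intro lp_weak_duality) auto
    with cy True show False by simp
  next
    case False
    define t where "t = - r"
    with False \<open>r \<le> 0\<close> have "0 < t" by simp
    define x where "x n = y n / t" for n
    have "b s \<le> (\<Sum>n\<in>UNIV. A s n * x n)" for s
    proof -
      have "b s * t \<le> (\<Sum>n\<in>UNIV. A s n * y n)"
        using Ay[rule_format, of s] unfolding t_def by (simp add: algebra_simps)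
      then show ?thesis
        using \<open>0 < t\<close> by (simp add: x_def pos_le_divide_eq sum_divide_distrib[symmetric])
    qed
    moreover have "\<forall>n. 0 \<le> x n"
      using y \<open>0 < t\<close> by (simp add: x_def)
    ultimately have "d \<le> (\<Sum>n\<in>UNIV. c n * x n)"
      using primal_bound by blast
    also have "\<dots> = (\<Sum>n\<in>UNIV. c n * y n) / t"
      by (simp add: x_def sum_divide_distrib)
    also have "\<dots> < d"
    proof -
      have "(\<Sum>n\<in>UNIV. c n * y n) < d * t"
        using cy by (simp add: t_def algebra_simps)
      then show ?thesis
        using \<open>0 < t\<close> by (simp add: pos_divide_less_eq)
    qed
    finally show False by simp
  qed
qed

section \<open>The follower problem with fixed activation vector as a linear program\<close>

text \<open>
  Variables \<open>x\<^sub>i\<^sub>0, x\<^sub>i\<^sub>j, q\<^sub>i, y\<^sub>0, y\<^sub>j\<close> and rows \<open>\<Sum>\<^sub>v a\<^sub>c\<^sub>v x\<^sub>v \<ge> b\<^sub>c\<close> of the follower LP. The rows are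
  matched with the dual variables \<open>\<mu>\<^sub>1, \<sigma>\<^sub>j, \<mu>\<^sub>2, \<Gamma>\<^sub>j, \<xi>\<^sub>i, \<tau>\<^sub>i\<^sub>j, \<nu>\<^sub>j\<close> of BMIPe. The demand equality
  is split into the rows \<open>Serve_ge\<close> and \<open>Serve_le\<close>, whose multipliers combine to the free \<open>\<eta>\<^sub>i\<close>.
  The row \<open>Activation j\<close> has no variables; it makes the LP infeasible when \<open>t\<^sub>j > z\<^sub>j\<close>.
\<close>

datatype ('i, 'j) lp_var = Vx0 'i | Vx 'i 'j | Vq 'i | Vy0 | Vy 'j

datatype ('i, 'j) lp_con =
  Budget | Capacity 'j | Cloud_demand | Edge_demand 'j | Serve_ge 'i | Serve_le 'i
  | Delay 'i | Access 'i 'j | Activation 'j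

lemma UNIV_lp_var:
  "UNIV = range Vx0 \<union> (range (case_prod Vx) \<union> (range Vq \<union> insert Vy0 (range Vy)))"
proof -
  have "v \<in> range Vx0 \<union> (range (case_prod Vx) \<union> (range Vq \<union> insert Vy0 (range Vy)))" for v
    by (cases v) auto
  then show ?thesis by blast
qed

lemma UNIV_lp_con:
  "UNIV = insert Budget (range Capacity \<union> insert Cloud_demand (range Edge_demand \<union>
     (range Serve_ge \<union> (range Serve_le \<union> (range Delay \<union> (range (case_prod Access) \<union> range Activation))))))"
proof -
  have "c \<in> insert Budget (range Capacity \<union> insert Cloud_demand (range Edge_demand \<union>
     (range Serve_ge \<union> (range Serve_le \<union> (range Delay \<union> (range (case_prod Access) \<union> range Activation))))))" for c
    by (cases c) auto
  then show ?thesis by blast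
qed

instance lp_var :: (finite, finite) finite
  by standard (simp add: UNIV_lp_var)

instance lp_con :: (finite, finite) finite
  by standard (simp add: UNIV_lp_con)

lemma sum_lp_var:
  "(\<Sum>v\<in>UNIV. f v) = (\<Sum>i\<in>UNIV. f (Vx0 i)) + (\<Sum>i\<in>UNIV. \<Sum>j\<in>UNIV. f (Vx i j))
     + (\<Sum>i\<in>UNIV. f (Vq i)) + f Vy0 + (\<Sum>j\<in>UNIV. f (Vy j))"
  for f :: "('i::finite, 'j::finite) lp_var \<Rightarrow> 'a::comm_monoid_add"
  apply (subst UNIV_lp_var)
  apply (subst sum.union_disjoint, simp, simp, fastforce)+
  apply (subst sum.insert, simp, fastforce)
  apply (simp add: sum.reindex inj_def sum_UNIV_prod[of "\<lambda>p. f (case_prod Vx p)"] add.assoc)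
  done

lemma sum_lp_con:
  "(\<Sum>c\<in>UNIV. f c) = f Budget + (\<Sum>j\<in>UNIV. f (Capacity j)) + f Cloud_demand
     + (\<Sum>j\<in>UNIV. f (Edge_demand j)) + (\<Sum>i\<in>UNIV. f (Serve_ge i)) + (\<Sum>i\<in>UNIV. f (Serve_le i))
     + (\<Sum>i\<in>UNIV. f (Delay i)) + (\<Sum>i\<in>UNIV. \<Sum>j\<in>UNIV. f (Access i j))
     + (\<Sum>j\<in>UNIV. f (Activation j))"
  for f :: "('i::finite, 'j::finite) lp_con \<Rightarrow> 'a::comm_monoid_add"
  apply (subst UNIV_lp_con)
  apply (subst sum.insert, simp, fastforce)
  apply (subst sum.union_disjoint, simp, simp, fastforce)
  apply (subst sum.insert, simp, fastforce)
  apply (subst sum.union_disjoint, simp, simp, fastforce)+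
  apply (simp add: sum.reindex inj_def sum_UNIV_prod[of "\<lambda>p. f (case_prod Access p)"] add.assoc)
  done

fun lp_coeff :: "('i::finite, 'j::finite, 'k::finite) prm \<Rightarrow> ('j \<Rightarrow> real)
    \<Rightarrow> ('i, 'j) lp_con \<Rightarrow> ('i, 'j) lp_var \<Rightarrow> real" where
  "lp_coeff P p Budget Vy0 = - p0 P"
| "lp_coeff P p Budget (Vy j) = - p j"
| "lp_coeff P p (Capacity j) (Vy j') = (if j = j' then -1 else 0)"
| "lp_coeff P p Cloud_demand Vy0 = 1"
| "lp_coeff P p Cloud_demand (Vx0 i) = -1"
| "lp_coeff P p (Edge_demand j) (Vy j') = (if j = j' then 1 else 0)"
| "lp_coeff P p (Edge_demand j) (Vx i j') = (if j = j' then -1 else 0)"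
| "lp_coeff P p (Serve_ge i) (Vx0 i') = (if i = i' then 1 else 0)"
| "lp_coeff P p (Serve_ge i) (Vx i' j) = (if i = i' then 1 else 0)"
| "lp_coeff P p (Serve_ge i) (Vq i') = (if i = i' then 1 else 0)"
| "lp_coeff P p (Serve_le i) (Vx0 i') = (if i = i' then -1 else 0)"
| "lp_coeff P p (Serve_le i) (Vx i' j) = (if i = i' then -1 else 0)"
| "lp_coeff P p (Serve_le i) (Vq i') = (if i = i' then -1 else 0)"
| "lp_coeff P p (Delay i) (Vx0 i') = (if i = i' then - di0 P i else 0)"
| "lp_coeff P p (Delay i) (Vx i' j) = (if i = i' then - dij P i j else 0)"
| "lp_coeff P p (Access i j) (Vx i' j') = (if i = i' then if j = j' then -1 else 0 else 0)"
| "lp_coeff P p _ _ = 0"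

definition node_fee :: "('i::finite, 'j::finite, 'k::finite) prm \<Rightarrow> 'k \<Rightarrow> ('j \<Rightarrow> real)
    \<Rightarrow> ('j \<Rightarrow> real) \<Rightarrow> real" where
  "node_fee P k ps t = (\<Sum>j\<in>UNIV. (phijk P j k + sk P k * ps j) * t j)"

fun lp_rhs :: "('i::finite, 'j::finite, 'k::finite) prm \<Rightarrow> 'k \<Rightarrow> ('j \<Rightarrow> real) \<Rightarrow> ('j \<Rightarrow> real)
    \<Rightarrow> ('j \<Rightarrow> real) \<Rightarrow> ('i, 'j) lp_con \<Rightarrow> real" where
  "lp_rhs P k ps z t Budget = node_fee P k ps t - Bk P k"
| "lp_rhs P k ps z t (Capacity j) = - (Cj P j * t j)"
| "lp_rhs P k ps z t Cloud_demand = 0"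
| "lp_rhs P k ps z t (Edge_demand j) = 0"
| "lp_rhs P k ps z t (Serve_ge i) = Rik P i k"
| "lp_rhs P k ps z t (Serve_le i) = - Rik P i k"
| "lp_rhs P k ps z t (Delay i) = - (Dkm P k * Rik P i k)"
| "lp_rhs P k ps z t (Access i j) = - (aijk P i j k * Rik P i k)"
| "lp_rhs P k ps z t (Activation j) = t j - z j"

fun lp_cost :: "('i::finite, 'j::finite, 'k::finite) prm \<Rightarrow> 'k \<Rightarrow> ('j \<Rightarrow> real)
    \<Rightarrow> ('i, 'j) lp_var \<Rightarrow> real" where
  "lp_cost P k p (Vx0 i) = wk P k * di0 P i"
| "lp_cost P k p (Vx i j) = wk P k * dij P i j"
| "lp_cost P k p (Vq i) = psik P i k"
| "lp_cost P k p Vy0 = p0 P"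
| "lp_cost P k p (Vy j) = p j"

fun lp_point :: "('i, 'j) fv \<Rightarrow> ('i, 'j) lp_var \<Rightarrow> real" where
  "lp_point u (Vx0 i) = fx0 u i"
| "lp_point u (Vx i j) = fx u i j"
| "lp_point u (Vq i) = fq u i"
| "lp_point u Vy0 = fy0 u"
| "lp_point u (Vy j) = fy u j"

definition fv_of_lp :: "(('i, 'j) lp_var \<Rightarrow> real) \<Rightarrow> ('j \<Rightarrow> real) \<Rightarrow> ('i, 'j) fv" where
  "fv_of_lp x t = \<lparr>fx0 = \<lambda>i. x (Vx0 i), fx = \<lambda>i j. x (Vx i j), fq = \<lambda>i. x (Vq i), fy0 = x Vy0,
     fy = \<lambda>j. x (Vy j), ft = t\<rparr>"

lemma lp_point_fv_of_lp [simp]: "lp_point (fv_of_lp x t) = x"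
proof
  show "lp_point (fv_of_lp x t) v = x v" for v
    by (cases v) (simp_all add: fv_of_lp_def)
qed

lemma ft_fv_of_lp [simp]: "ft (fv_of_lp x t) = t"
  by (simp add: fv_of_lp_def)

lemma Ck_eq_lp_cost:
  "Ck P k p ps u = (\<Sum>v\<in>UNIV. lp_cost P k p v * lp_point u v) + node_fee P k ps (ft u)"
  by (simp add: Ck_def node_fee_def sum_lp_var sum_distrib_left algebra_simps)

lemma all_lp_var: "(\<forall>v. R v) \<longleftrightarrow> (\<forall>i. R (Vx0 i)) \<and> (\<forall>i j. R (Vx i j)) \<and> (\<forall>i. R (Vq i)) \<and> R Vy0 \<and> (\<forall>j. R (Vy j))"
  by (metis lp_var.exhaust)

lemma all_lp_con:
  "(\<forall>c. R c) \<longleftrightarrow> R Budget \<and> (\<forall>j. R (Capacity j)) \<and> R Cloud_demand \<and> (\<forall>j. R (Edge_demand j))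
     \<and> (\<forall>i. R (Serve_ge i)) \<and> (\<forall>i. R (Serve_le i)) \<and> (\<forall>i. R (Delay i))
     \<and> (\<forall>i j. R (Access i j)) \<and> (\<forall>j. R (Activation j))"
  by (metis lp_con.exhaust)

lemma lp_row_sums:
  fixes x :: "('i::finite, 'j::finite) lp_var \<Rightarrow> real" and P :: "('i, 'j, 'k::finite) prm"
  shows "(\<Sum>v\<in>UNIV. lp_coeff P p Budget v * x v) = - (p0 P * x Vy0 + (\<Sum>j\<in>UNIV. p j * x (Vy j)))"
    and "(\<Sum>v\<in>UNIV. lp_coeff P p (Capacity j) v * x v) = - x (Vy j)"
    and "(\<Sum>v\<in>UNIV. lp_coeff P p Cloud_demand v * x v) = x Vy0 - (\<Sum>i\<in>UNIV. x (Vx0 i))"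
    and "(\<Sum>v\<in>UNIV. lp_coeff P p (Edge_demand j) v * x v) = x (Vy j) - (\<Sum>i\<in>UNIV. x (Vx i j))"
    and "(\<Sum>v\<in>UNIV. lp_coeff P p (Serve_ge i) v * x v) = x (Vx0 i) + (\<Sum>j\<in>UNIV. x (Vx i j)) + x (Vq i)"
    and "(\<Sum>v\<in>UNIV. lp_coeff P p (Serve_le i) v * x v) = - (x (Vx0 i) + (\<Sum>j\<in>UNIV. x (Vx i j)) + x (Vq i))"
    and "(\<Sum>v\<in>UNIV. lp_coeff P p (Delay i) v * x v)
          = - (x (Vx0 i) * di0 P i + (\<Sum>j\<in>UNIV. x (Vx i j) * dij P i j))"
    and "(\<Sum>v\<in>UNIV. lp_coeff P p (Access i j) v * x v) = - x (Vx i j)"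
    and "(\<Sum>v\<in>UNIV. lp_coeff P p (Activation j) v * x v) = 0"
  by (simp_all add: sum_lp_var sum_negf if_zero_mult mult_if_zero sum_if_zero algebra_simps)

lemma lp_column_sums:
  fixes l :: "('i::finite, 'j::finite) lp_con \<Rightarrow> real" and P :: "('i, 'j, 'k::finite) prm"
  shows "(\<Sum>c\<in>UNIV. l c * lp_coeff P p c (Vx0 i))
          = - l Cloud_demand + l (Serve_ge i) - l (Serve_le i) - di0 P i * l (Delay i)"
    and "(\<Sum>c\<in>UNIV. l c * lp_coeff P p c (Vx i j))
          = - l (Edge_demand j) + l (Serve_ge i) - l (Serve_le i) - dij P i j * l (Delay i) - l (Access i j)"
    and "(\<Sum>c\<in>UNIV. l c * lp_coeff P p c (Vq i)) = l (Serve_ge i) - l (Serve_le i)"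
    and "(\<Sum>c\<in>UNIV. l c * lp_coeff P p c Vy0) = - p0 P * l Budget + l Cloud_demand"
    and "(\<Sum>c\<in>UNIV. l c * lp_coeff P p c (Vy j)) = - p j * l Budget - l (Capacity j) + l (Edge_demand j)"
  by (simp_all add: sum_lp_con if_zero_mult mult_if_zero sum_if_zero algebra_simps)

lemma Sk_iff_lp_feasible:
  "u \<in> Sk P k p ps z \<longleftrightarrow> (\<forall>j. ft u j \<in> {0, 1}) \<and> (\<forall>v. 0 \<le> lp_point u v)
     \<and> (\<forall>c. lp_rhs P k ps z (ft u) c \<le> (\<Sum>v\<in>UNIV. lp_coeff P p c v * lp_point u v))"
proof -
  have budget: "p0 P * fy0 u + (\<Sum>j\<in>UNIV. p j * fy u j) + node_fee P k ps (ft u) \<le> Bk P k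
    \<longleftrightarrow> node_fee P k ps (ft u) - Bk P k \<le> - (p0 P * fy0 u + (\<Sum>j\<in>UNIV. p j * fy u j))"
    by linarith
  have served: "(\<forall>i. fx0 u i + (\<Sum>j\<in>UNIV. fx u i j) + fq u i = Rik P i k)
    \<longleftrightarrow> (\<forall>i. Rik P i k \<le> fx0 u i + (\<Sum>j\<in>UNIV. fx u i j) + fq u i)
      \<and> (\<forall>i. - Rik P i k \<le> - (fx0 u i + (\<Sum>j\<in>UNIV. fx u i j) + fq u i))"
    unfolding neg_le_iff_le by (simp add: order_eq_iff all_conj_distrib conj_commute)
  show ?thesis
    unfolding Sk_def all_lp_var all_lp_con lp_row_sums lp_point.simps lp_rhs.simps mem_Collect_eq
      node_fee_def[symmetric] budget served
    by (simp only: neg_le_iff_le diff_le_0_iff_le diff_ge_0_iff_ge) blast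
qed

section \<open>Dual bounds on the follower cost\<close>

definition dual_feasible :: "('i::finite, 'j::finite, 'k::finite) prm \<Rightarrow> 'k \<Rightarrow> ('j \<Rightarrow> real)
    \<Rightarrow> ('i, 'j) dv \<Rightarrow> bool" where
  "dual_feasible P k p D \<longleftrightarrow>
     mu1 D \<ge> 0 \<and> mu2 D \<ge> 0 \<and> (\<forall>j. nu D j \<ge> 0) \<and> (\<forall>j. Gam D j \<ge> 0) \<and> (\<forall>j. sig D j \<ge> 0)
   \<and> (\<forall>i. xi D i \<ge> 0) \<and> (\<forall>i j. tau D i j \<ge> 0)
   \<and> p0 P * (1 + mu1 D) - mu2 D \<ge> 0
   \<and> (\<forall>j. p j * mu1 D - Gam D j + sig D j + p j \<ge> 0)
   \<and> (\<forall>i. mu2 D + di0 P i * xi D i - eta D i \<ge> - wk P k * di0 P i)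
   \<and> (\<forall>i. eta D i \<le> psik P i k)
   \<and> (\<forall>i j. Gam D j + dij P i j * xi D i + tau D i j - eta D i \<ge> - wk P k * dij P i j)"

definition dual_value :: "('i::finite, 'j::finite, 'k::finite) prm \<Rightarrow> 'k \<Rightarrow> ('j \<Rightarrow> real)
    \<Rightarrow> ('j \<Rightarrow> real) \<Rightarrow> ('j \<Rightarrow> real) \<Rightarrow> ('i, 'j) dv \<Rightarrow> real" where
  "dual_value P k ps z t D =
        node_fee P k ps t - mu1 D * (Bk P k - node_fee P k ps t)
      + (\<Sum>j\<in>UNIV. nu D j * (t j - z j))
      + (\<Sum>i\<in>UNIV. Rik P i k * eta D i)
      - (\<Sum>i\<in>UNIV. Rik P i k * Dkm P k * xi D i)
      - (\<Sum>j\<in>UNIV. Cj P j * t j * sig D j)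
      - (\<Sum>i\<in>UNIV. \<Sum>j\<in>UNIV. aijk P i j k * tau D i j * Rik P i k)"

lemma dual_ok_iff:
  "dual_ok P v k t D \<longleftrightarrow>
     dual_feasible P k (pp v) D \<and> Ck P k (pp v) (pps v) (fol v k) \<le> dual_value P k (pps v) (zz v) t D"
  unfolding dual_ok_def dual_feasible_def dual_value_def node_fee_def by blast

definition dv_of_lp :: "(('i, 'j) lp_con \<Rightarrow> real) \<Rightarrow> ('i, 'j) dv" where
  "dv_of_lp l = \<lparr>mu1 = l Budget, mu2 = l Cloud_demand, nu = \<lambda>j. l (Activation j),
     Gam = \<lambda>j. l (Edge_demand j), sig = \<lambda>j. l (Capacity j), xi = \<lambda>i. l (Delay i),
     tau = \<lambda>i j. l (Access i j), eta = \<lambda>i. l (Serve_ge i) - l (Serve_le i)\<rparr>"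

fun lp_mult :: "('i, 'j) dv \<Rightarrow> ('i, 'j) lp_con \<Rightarrow> real" where
  "lp_mult D Budget = mu1 D"
| "lp_mult D (Capacity j) = sig D j"
| "lp_mult D Cloud_demand = mu2 D"
| "lp_mult D (Edge_demand j) = Gam D j"
| "lp_mult D (Serve_ge i) = max (eta D i) 0"
| "lp_mult D (Serve_le i) = max (- eta D i) 0"
| "lp_mult D (Delay i) = xi D i"
| "lp_mult D (Access i j) = tau D i j"
| "lp_mult D (Activation j) = nu D j"

lemma dv_of_lp_lp_mult [simp]: "dv_of_lp (lp_mult D) = D"
proof -
  have "max (eta D i) 0 - max (- eta D i) 0 = eta D i" for i
    by linarith
  then show ?thesis
    by (simp add: dv_of_lp_def)
qed

lemma lp_mult_nonneg: "dual_feasible P k p D \<Longrightarrow> 0 \<le> lp_mult D c"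
  by (cases c) (simp_all add: dual_feasible_def)

lemma dual_feasible_dv_of_lp:
  assumes "\<forall>c. 0 \<le> l c"
  shows "dual_feasible P k p (dv_of_lp l) \<longleftrightarrow> (\<forall>v. (\<Sum>c\<in>UNIV. l c * lp_coeff P p c v) \<le> lp_cost P k p v)"
  using assms unfolding dual_feasible_def all_lp_var all_lp_con lp_column_sums
  by (simp add: dv_of_lp_def algebra_simps) blast

lemma dual_value_dv_of_lp:
  "dual_value P k ps z t (dv_of_lp l) = node_fee P k ps t + (\<Sum>c\<in>UNIV. l c * lp_rhs P k ps z t c)"
  by (simp add: dual_value_def dv_of_lp_def sum_lp_con algebra_simps sum_subtractf sum_distrib_left sum_negf)

lemma dual_value_le_Ck:
  assumes D: "dual_feasible P k p D" and u: "u \<in> Sk P k p ps z"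
  shows "dual_value P k ps z (ft u) D \<le> Ck P k p ps u"
proof -
  define l where "l = lp_mult D"
  have l: "\<forall>c. 0 \<le> l c"
    using D by (simp add: l_def lp_mult_nonneg)
  moreover have "\<forall>v. (\<Sum>c\<in>UNIV. l c * lp_coeff P p c v) \<le> lp_cost P k p v"
    using D l by (simp add: l_def flip: dual_feasible_dv_of_lp)
  ultimately have "(\<Sum>c\<in>UNIV. l c * lp_rhs P k ps z (ft u) c) \<le> (\<Sum>v\<in>UNIV. lp_cost P k p v * lp_point u v)"
    using u by (intro lp_weak_duality) (auto simp: Sk_iff_lp_feasible)
  moreover have "dual_value P k ps z (ft u) D = node_fee P k ps (ft u) + (\<Sum>c\<in>UNIV. l c * lp_rhs P k ps z (ft u) c)"
    using dual_value_dv_of_lp[of P k ps z "ft u" l] by (simp add: l_def)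
  ultimately show ?thesis
    by (simp add: Ck_eq_lp_cost)
qed

lemma lp_dual_feasible_exists:
  fixes P :: "('i::finite, 'j::finite, 'k::finite) prm"
  assumes "valid_prm P"
  shows "\<exists>l. (\<forall>c. 0 \<le> l c) \<and> (\<forall>v. (\<Sum>c\<in>UNIV. l c * lp_coeff P p c v) \<le> lp_cost P k p v)"
proof -
  define D0 :: "('i, 'j) dv" where
    "D0 = \<lparr>mu1 = 0, mu2 = 0, nu = \<lambda>_. 0, Gam = \<lambda>_. 0, sig = \<lambda>j. \<bar>p j\<bar>, xi = \<lambda>_. 0,
       tau = \<lambda>_ _. 0, eta = \<lambda>_. 0\<rparr>"
  have "0 \<le> p0 P" "0 \<le> wk P k * di0 P i" "0 \<le> wk P k * dij P i j" "0 \<le> psik P i k" for i j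
    using assms by (simp_all add: valid_prm_def)
  moreover have "0 \<le> \<bar>p j\<bar> + p j" for j
    using abs_ge_minus_self[of "p j"] by linarith
  ultimately have D0: "dual_feasible P k p D0"
    by (simp add: dual_feasible_def D0_def)
  then have "\<forall>c. 0 \<le> lp_mult D0 c"
    by (simp add: lp_mult_nonneg)
  moreover have "\<forall>v. (\<Sum>c\<in>UNIV. lp_mult D0 c * lp_coeff P p c v) \<le> lp_cost P k p v"
    using dual_feasible_dv_of_lp[OF calculation, of P k p] D0 by simp
  ultimately show ?thesis
    by blast
qed

lemma exists_dual_value_ge:
  assumes P: "valid_prm P" and t: "\<forall>j. t j \<in> {0, 1}"
    and bound: "\<And>u. u \<in> Sk P k p ps z \<Longrightarrow> m \<le> Ck P k p ps u"
  shows "\<exists>D. dual_feasible P k p D \<and> m \<le> dual_value P k ps z t D"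
proof -
  have "m - node_fee P k ps t \<le> (\<Sum>v\<in>UNIV. lp_cost P k p v * x v)"
    if "\<forall>v. 0 \<le> x v" "\<forall>c. lp_rhs P k ps z t c \<le> (\<Sum>v\<in>UNIV. lp_coeff P p c v * x v)" for x
  proof -
    have "fv_of_lp x t \<in> Sk P k p ps z"
      using that t by (simp add: Sk_iff_lp_feasible)
    then have "m \<le> Ck P k p ps (fv_of_lp x t)"
      by (rule bound)
    then show ?thesis
      by (simp add: Ck_eq_lp_cost)
  qed
  with lp_dual_feasible_exists[OF P] have "\<exists>l. (\<forall>c. 0 \<le> l c)
      \<and> (\<forall>v. (\<Sum>c\<in>UNIV. l c * lp_coeff P p c v) \<le> lp_cost P k p v)
      \<and> m - node_fee P k ps t \<le> (\<Sum>c\<in>UNIV. l c * lp_rhs P k ps z t c)"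
    by (rule lp_strong_duality)
  then obtain l where "\<forall>c. 0 \<le> l c" "\<forall>v. (\<Sum>c\<in>UNIV. l c * lp_coeff P p c v) \<le> lp_cost P k p v"
    and "m - node_fee P k ps t \<le> (\<Sum>c\<in>UNIV. l c * lp_rhs P k ps z t c)"
    by blast
  then show ?thesis
    by (intro exI[of _ "dv_of_lp l"]) (simp add: dual_feasible_dv_of_lp dual_value_dv_of_lp)
qed

lemma follower_optimal_iff_dual_bounds:
  assumes "valid_prm P"
  shows "(\<forall>u\<in>Sk P k p ps z. Ck P k p ps w \<le> Ck P k p ps u) \<longleftrightarrow>
    (\<forall>t. (\<forall>j. t j \<in> {0, 1}) \<longrightarrow> (\<exists>D. dual_feasible P k p D \<and> Ck P k p ps w \<le> dual_value P k ps z t D))"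
proof
  assume "\<forall>u\<in>Sk P k p ps z. Ck P k p ps w \<le> Ck P k p ps u"
  then show "\<forall>t. (\<forall>j. t j \<in> {0, 1}) \<longrightarrow> (\<exists>D. dual_feasible P k p D \<and> Ck P k p ps w \<le> dual_value P k ps z t D)"
    using exists_dual_value_ge[OF assms] by blast
next
  assume cert: "\<forall>t. (\<forall>j. t j \<in> {0, 1}) \<longrightarrow> (\<exists>D. dual_feasible P k p D \<and> Ck P k p ps w \<le> dual_value P k ps z t D)"
  show "\<forall>u\<in>Sk P k p ps z. Ck P k p ps w \<le> Ck P k p ps u"
  proof
    fix u assume u: "u \<in> Sk P k p ps z"
    then have "\<forall>j. ft u j \<in> {0, 1}"
      by (simp add: Sk_iff_lp_feasible)
    then obtain D where "dual_feasible P k p D" "Ck P k p ps w \<le> dual_value P k ps z (ft u) D"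
      using cert by blast
    with u show "Ck P k p ps w \<le> Ck P k p ps u"
      using dual_value_le_Ck order.trans by blast
  qed
qed

section \<open>The single-level reformulation\<close>

lemma feas_BMIP_iff_feas_BMIP1: "feas_BMIP P v \<longleftrightarrow> feas_BMIP1 P v"
  unfolding feas_BMIP_def feas_BMIP1_def is_arg_min_linorder by blast

lemma feas_BMIP1_iff_feas_BMIPe:
  fixes P :: "('i::finite, 'j::finite, 'k::finite) prm" and en :: "'k \<Rightarrow> nat \<Rightarrow> 'j \<Rightarrow> real"
  assumes P: "valid_prm P"
    and en: "\<And>k. en k ` {1..2 ^ CARD('j)} = {t. \<forall>j. t j \<in> {0, 1}}"
  shows "feas_BMIP1 P v \<longleftrightarrow> (\<exists>D. feas_BMIPe P en v D)"
proof -
  let ?L = "{1..2 ^ CARD('j)}"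
  have "(\<exists>D. \<forall>k. \<forall>l\<in>?L. dual_ok P v k (en k l) (D k l))
    \<longleftrightarrow> (\<forall>k. \<forall>l\<in>?L. \<exists>D. dual_ok P v k (en k l) D)"
    by (simp only: bchoice_iff choice_iff)
  also have "\<dots> \<longleftrightarrow> (\<forall>k. \<forall>t\<in>en k ` ?L. \<exists>D. dual_ok P v k t D)"
    by simp
  also have "\<dots> \<longleftrightarrow> (\<forall>k. \<forall>t\<in>{t. \<forall>j. t j \<in> {0, 1}}. \<exists>D. dual_ok P v k t D)"
    by (simp only: en)
  also have "\<dots> \<longleftrightarrow> (\<forall>k. \<forall>u\<in>Sk P k (pp v) (pps v) (zz v).
      Ck P k (pp v) (pps v) (fol v k) \<le> Ck P k (pp v) (pps v) u)"
    by (simp add: dual_ok_iff follower_optimal_iff_dual_bounds[OF P])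
  finally show ?thesis
    unfolding feas_BMIP1_def feas_BMIPe_def by blast
qed

theorem proposition3:
  fixes P :: "('i::finite,'j::finite,'k::finite) prm"
    and en :: "'k \<Rightarrow> nat \<Rightarrow> 'j \<Rightarrow> real"
  assumes "valid_prm P"
    and "\<exists>v. opt_BMIP P v"
    and "\<forall>k. bij_betw (en k) {1..2 ^ CARD('j)} {t. \<forall>j. t j \<in> {0,1}}"
  shows "(\<exists>v. opt_BMIP1 P v) \<and> (\<exists>v D. opt_BMIPe P en v D)
       \<and> (\<forall>v v' D'. opt_BMIP1 P v \<longrightarrow> opt_BMIPe P en v' D' \<longrightarrow> profit P v = profit P v')
       \<and> (\<forall>v. opt_BMIP1 P v \<longleftrightarrow> (\<exists>D. opt_BMIPe P en v D))"
proof -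
  have "feas_BMIP1 P v \<longleftrightarrow> (\<exists>D. feas_BMIPe P en v D)" for v
    using feas_BMIP1_iff_feas_BMIPe[OF assms(1)] assms(3) by (simp add: bij_betw_def)
  then have opt: "opt_BMIP1 P v \<longleftrightarrow> (\<exists>D. opt_BMIPe P en v D)" for v
    unfolding opt_BMIP1_def opt_BMIPe_def by blast
  have "\<exists>v. opt_BMIP1 P v"
    using assms(2) unfolding opt_BMIP_def opt_BMIP1_def feas_BMIP_iff_feas_BMIP1 .
  moreover have "profit P v = profit P v'" if "opt_BMIP1 P v" "opt_BMIP1 P v'" for v v'
    using that unfolding opt_BMIP1_def by (meson order.antisym)
  ultimately show ?thesis
    using opt by blast
qed

end
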